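(* In $2\times2\times3$ Abalone, let $C1$ be the constellation with Black marbles on $c,f,g$ and Gray marbles on $a,d,h$; let $C2$ have Black on $c,f,g$ and Gray on $a,d,e$; let $C3$ have Black on $c,f,g$ and Gray on $d,e,h$. If $C$ is any constellation obtained from $C1$ by a single legal Gray move and $C$ is isomorphic to neither $C2$ nor $C3$, then Black, moving next from $C$, can force a win.
   Context: The $2\times2\times3$ board has 10 hexagonal cells in three vertical columns of sizes 3, 4, 3. In axial coordinates (cells adjacent when differing by $\pm(0,1),\pm(1,0),\pm(1,-1)$) the cells are $a=(0,0)$, $b=(0,1)$, $c=(0,2)$ (left column, bottom to top), $d=(1,-1)$, $e=(1,0)$, $f=(1,1)$, $g=(1,2)$ (middle column, bottom to top), $h=(2,-1)$, $i=(2,0)$, $j=(2,1)$ (right column, bottom to top). Its maximal lines are $a$-$b$-$c$, $d$-$e$-$f$-$g$, $h$-$i$-$j$, $a$-$e$-$i$, $b$-$f$-$j$, $c$-$g$, $d$-$h$, $a$-$d$, $b$-$e$-$h$, $c$-$f$-$i$, $g$-$j$; adjacent cells are consecutive cells of these lines. A constellation assigns each cell black, gray or empty; each player has 3 marbles. Black (Left) and Gray (Right) alternate turns. On a turn a player moves 1, 2 or 3 of their own marbles occupying consecutive cells of a line, one step in one of the six lattice directions. Broadside move (direction not parallel to the group's line, or a single marble): each moved marble must land on an empty board cell. In-line move (direction parallel to the line, group of $k$ marbles): if the cell $X$ beyond the front marble is an empty board cell the group advances; if $X$ holds opponent marbles, forming $m$ consecutive opponent marbles in that direction, the push is legal only if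 $m<k$ and the cell after them is empty or off the board, and then all shift one step, an opponent marble leaving the board being removed; moves with $X$ off the board or holding an own marble are illegal, and one may never move one's own marble off the board. The game ends as soon as one marble is pushed off, the pusher winning; never-ending play is a draw. A player can force a win from a constellation with a given player to move if they have a strategy guaranteeing a push-off in finitely many moves against all opponent play. The symmetries of this board are the identity, the left-right reflection ($a\leftrightarrow h$, $b\leftrightarrow i$, $c\leftrightarrow j$, middle column fixed), the top-bottom reflection ($a\leftrightarrow c$, $d\leftrightarrow g$, $e\leftrightarrow f$, $h\leftrightarrow j$, $b,i$ fixed), and their composition; two constellations are isomorphic if a symmetry maps one onto the other. *)

theory Defs
  imports Main
begin

section \<open>The 2x2x3 Abalone board in axial coordinates\<close>

type_synonym cell = "int \<times> int"

definition cA :: cell where "cA = (0,0)"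
definition cB :: cell where "cB = (0,1)"
definition cC :: cell where "cC = (0,2)"
definition cD :: cell where "cD = (1,-1)"
definition cE :: cell where "cE = (1,0)"
definition cF :: cell where "cF = (1,1)"
definition cG :: cell where "cG = (1,2)"
definition cH :: cell where "cH = (2,-1)"
definition cI :: cell where "cI = (2,0)"
definition cJ :: cell where "cJ = (2,1)"

definition board :: "cell set" where
  "board = {cA, cB, cC, cD, cE, cF, cG, cH, cI, cJ}"

definition linedirs :: "cell set" where
  "linedirs = {(0,1), (1,0), (1,-1)}"

definition negc :: "cell \<Rightarrow> cell" where
  "negc v = (- fst v, - snd v)"

definition dirs :: "cell set" where
  "dirs = linedirs \<union> negc ` linedirs"

definition sh :: "cell \<Rightarrow> cell \<Rightarrow> int \<Rightarrow> cell" where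
  "sh p d i = (fst p + i * fst d, snd p + i * snd d)"

text \<open>A group is k in {1,2,3} own marbles s, s+v, ..., s+(k-1)v along a line
  direction v; d is the direction of motion.\<close>
definition abalone_move :: "cell set \<Rightarrow> cell set \<Rightarrow> cell set \<Rightarrow> cell set \<Rightarrow> bool \<Rightarrow> bool" where
  "abalone_move P Q P' Q' off \<longleftrightarrow>
    (\<exists>s v (k::int) d.
       v \<in> linedirs \<and> 1 \<le> k \<and> k \<le> 3 \<and> d \<in> dirs \<and>
       (let grp = {sh s v i | i. 0 \<le> i \<and> i < k};
            mv = (\<lambda>c. sh c d 1)
        in grp \<subseteq> P \<and>
           P' = (P - grp) \<union> mv ` grp \<and>
           ( 
             ((k = 1 \<or> (d \<noteq> v \<and> d \<noteq> negc v)) \<and>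
              (\<forall>c\<in>grp. mv c \<in> board \<and> mv c \<notin> P \<and> mv c \<notin> Q) \<and>
              Q' = Q \<and> \<not> off)
           \<or> 
             (2 \<le> k \<and> (d = v \<or> d = negc v) \<and>
              (let X = mv (if d = v then sh s v (k - 1) else s)
               in 
                  (X \<in> board \<and> X \<notin> P \<and> X \<notin> Q \<and> Q' = Q \<and> \<not> off)
                \<or> 
                  (\<exists>m::int. 1 \<le> m \<and> m < k \<and>
                     (\<forall>i. 0 \<le> i \<and> i < m \<longrightarrow> sh X d i \<in> Q) \<and>
                     sh X d m \<notin> Q \<and> sh X d m \<notin> P \<and>
                     (let pushed = {sh X d i | i. 0 \<le> i \<and> i < m}
                      in Q' = (Q - pushed) \<union> (mv ` pushed \<inter> board) \<and>
                         off = (sh X d m \<notin> board))))))))"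

text \<open>black_wins B G: with Black on B and Gray on G and Black to move, Black
  can force a push-off in finitely many moves (least fixed point).\<close>
inductive black_wins :: "cell set \<Rightarrow> cell set \<Rightarrow> bool" where
  push_now: "abalone_move B G B' G' True \<Longrightarrow> black_wins B G"
| step: "\<lbrakk> abalone_move B G B' G' False;
           \<exists>G'' B'' off. abalone_move G' B' G'' B'' off;
           \<forall>G'' B'' off. abalone_move G' B' G'' B'' off \<longrightarrow> \<not> off \<and> black_wins B'' G'' \<rbrakk>
         \<Longrightarrow> black_wins B G"

definition sym_lr :: "cell \<Rightarrow> cell" where
  "sym_lr p = (2 - fst p, snd p + fst p - 1)"

definition sym_tb :: "cell \<Rightarrow> cell" where
  "sym_tb p = (fst p, 2 - fst p - snd p)"

definition board_syms :: "(cell \<Rightarrow> cell) set" where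
  "board_syms = {id, sym_lr, sym_tb, sym_lr \<circ> sym_tb}"

text \<open>Constellations are pairs (black cells, gray cells).\<close>
definition isomorphic :: "cell set \<times> cell set \<Rightarrow> cell set \<times> cell set \<Rightarrow> bool" where
  "isomorphic X Y \<longleftrightarrow> (\<exists>\<sigma>\<in>board_syms. \<sigma> ` fst X = fst Y \<and> \<sigma> ` snd X = snd Y)"

definition C1 :: "cell set \<times> cell set" where "C1 = ({cC, cF, cG}, {cA, cD, cH})"
definition C2 :: "cell set \<times> cell set" where "C2 = ({cC, cF, cG}, {cA, cD, cE})"
definition C3 :: "cell set \<times> cell set" where "C3 = ({cC, cF, cG}, {cD, cE, cH})"

end

theory Submission imports Defs begin

text \<open>Black's win is witnessed by a small game-tree certificate: a list of
  constellations, each won either by an immediate push-off or by a quiet Black move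
  all of whose Gray replies lead to constellations listed earlier.  Checking the
  certificate, and that every Gray move from C1 other than those to C2 or C3 (up to
  symmetry) lands in it, is a finite evaluation over an executable enumeration of
  the legal moves.\<close>

definition line_dir_list :: "cell list" where
  "line_dir_list = [(0,1), (1,0), (1,-1)]"

definition dir_list :: "cell list" where
  "dir_list = line_dir_list @ map negc line_dir_list"

definition board_list :: "cell list" where
  "board_list = [cA, cB, cC, cD, cE, cF, cG, cH, cI, cJ]"

lemma set_line_dir_list [simp]: "set line_dir_list = linedirs"
  by (simp add: line_dir_list_def linedirs_def)

lemma set_dir_list [simp]: "set dir_list = dirs"
  by (simp add: dir_list_def dirs_def)

lemma set_board_list [simp]: "set board_list = board"
  by (simp add: board_list_def board_def)

text \<open>abalone_move for a fixed group (start s, line direction v, size k) and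
  direction d, with the index ranges written as integer lists so that it evaluates.\<close>
definition group_move ::
  "cell \<Rightarrow> cell \<Rightarrow> int \<Rightarrow> cell \<Rightarrow> cell set \<Rightarrow> cell set \<Rightarrow> cell set \<Rightarrow> cell set \<Rightarrow> bool \<Rightarrow> bool" where
  "group_move s v k d P Q P' Q' off \<longleftrightarrow>
    (let grp = sh s v ` set [0..k - 1];
         mv = (\<lambda>c. sh c d 1)
     in grp \<subseteq> P \<and>
        P' = (P - grp) \<union> mv ` grp \<and>
        (((k = 1 \<or> (d \<noteq> v \<and> d \<noteq> negc v)) \<and>
          (\<forall>c\<in>grp. mv c \<in> board \<and> mv c \<notin> P \<and> mv c \<notin> Q) \<and>
          Q' = Q \<and> \<not> off)
        \<or>
         (2 \<le> k \<and> (d = v \<or> d = negc v) \<and>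
          (let X = mv (if d = v then sh s v (k - 1) else s)
           in (X \<in> board \<and> X \<notin> P \<and> X \<notin> Q \<and> Q' = Q \<and> \<not> off)
            \<or> (\<exists>m\<in>set [1..k - 1].
                 (\<forall>i\<in>set [0..m - 1]. sh X d i \<in> Q) \<and>
                 sh X d m \<notin> Q \<and> sh X d m \<notin> P \<and>
                 (let pushed = sh X d ` set [0..m - 1]
                  in Q' = (Q - pushed) \<union> (mv ` pushed \<inter> board) \<and>
                     off = (sh X d m \<notin> board)))))))"

lemma abalone_move_iff_group_move:
  "abalone_move P Q P' Q' off \<longleftrightarrow>
    (\<exists>s v k d. v \<in> linedirs \<and> 1 \<le> k \<and> k \<le> 3 \<and> d \<in> dirs \<and> group_move s v k d P Q P' Q' off)"
proof -
  have ranges: "\<And>f a b. {f i | i. a \<le> i \<and> i < b} = f ` set [a..b - 1]"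
    "\<And>a b. set [a..b - 1] = {i. a \<le> i \<and> i < b}"
    by auto
  show ?thesis
    unfolding abalone_move_def group_move_def ranges Bex_def Ball_def
    by (simp add: conj_ac cong: conj_cong)
qed

text \<open>The outcome of a move is determined by the group, the direction and the
  number of pushed marbles, so these few candidates (the flag off
  included) contain every legal outcome.\<close>
definition move_candidates ::
  "cell \<Rightarrow> cell \<Rightarrow> int \<Rightarrow> cell \<Rightarrow> cell set \<Rightarrow> cell set \<Rightarrow> (cell set \<times> cell set \<times> bool) list" where
  "move_candidates s v k d P Q =
    (let grp = sh s v ` set [0..k - 1];
         mv = (\<lambda>c. sh c d 1);
         X = mv (if d = v then sh s v (k - 1) else s);
         Qs = Q # map (\<lambda>m. (Q - sh X d ` set [0..m - 1]) \<union> (mv ` sh X d ` set [0..m - 1] \<inter> board))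
                      [1..k - 1]
     in [((P - grp) \<union> mv ` grp, Q', off). Q' \<leftarrow> Qs, off \<leftarrow> [False, True]])"

lemma group_move_in_candidates:
  "group_move s v k d P Q P' Q' off \<Longrightarrow> (P', Q', off) \<in> set (move_candidates s v k d P Q)"
  unfolding group_move_def move_candidates_def Let_def
  by (cases off) (auto simp del: set_upto)

text \<open>The guard is implied by group_move; it only prunes the evaluation.\<close>
definition group_moves ::
  "cell \<Rightarrow> cell \<Rightarrow> int \<Rightarrow> cell \<Rightarrow> cell set \<Rightarrow> cell set \<Rightarrow> (cell set \<times> cell set \<times> bool) list" where
  "group_moves s v k d P Q =
    (if sh s v ` set [0..k - 1] \<subseteq> P
     then filter (\<lambda>(P', Q', off). group_move s v k d P Q P' Q' off) (move_candidates s v k d P Q)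
     else [])"

lemma group_move_group_subset:
  "group_move s v k d P Q P' Q' off \<Longrightarrow> sh s v ` set [0..k - 1] \<subseteq> P"
  unfolding group_move_def Let_def by (rule conjunct1)

lemma mem_group_moves:
  "(P', Q', off) \<in> set (group_moves s v k d P Q) \<longleftrightarrow> group_move s v k d P Q P' Q' off"
  unfolding group_moves_def
  using group_move_in_candidates[of s v k d P Q P' Q' off] group_move_group_subset[of s v k d P Q P' Q' off]
  by auto

definition legal_moves :: "cell set \<Rightarrow> cell set \<Rightarrow> (cell set \<times> cell set \<times> bool) list" where
  "legal_moves P Q =
    concat [group_moves s v k d P Q. s \<leftarrow> board_list, v \<leftarrow> line_dir_list, k \<leftarrow> [1, 2, 3], d \<leftarrow> dir_list]"

lemma mem_legal_moves:
  "(P', Q', off) \<in> set (legal_moves P Q) \<longleftrightarrow>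
    (\<exists>s\<in>board. \<exists>v\<in>linedirs. \<exists>k\<in>{1, 2, 3}. \<exists>d\<in>dirs. group_move s v k d P Q P' Q' off)"
  by (simp add: legal_moves_def mem_group_moves del: set_upto)

lemma legal_moves_sound:
  assumes "(P', Q', off) \<in> set (legal_moves P Q)"
  shows "abalone_move P Q P' Q' off"
proof -
  obtain s v k d where "v \<in> linedirs" "k \<in> {1, 2, 3}" "d \<in> dirs"
    and "group_move s v k d P Q P' Q' off"
    using assms unfolding mem_legal_moves by blast
  moreover have "1 \<le> k \<and> k \<le> 3"
    using \<open>k \<in> {1, 2, 3}\<close> by auto
  ultimately show ?thesis
    unfolding abalone_move_iff_group_move by blast
qed

lemma legal_moves_complete:
  assumes "P \<subseteq> board" and "abalone_move P Q P' Q' off"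
  shows "(P', Q', off) \<in> set (legal_moves P Q)"
proof -
  obtain s v k d where v: "v \<in> linedirs" and k: "1 \<le> k" "k \<le> 3" and d: "d \<in> dirs"
    and mv: "group_move s v k d P Q P' Q' off"
    using assms(2) unfolding abalone_move_iff_group_move by blast
  have "s = sh s v 0" and "0 \<in> set [0..k - 1]"
    using k by (simp_all add: sh_def)
  then have "s \<in> sh s v ` set [0..k - 1]"
    by blast
  with group_move_group_subset[OF mv] assms(1) have "s \<in> board"
    by blast
  moreover have "k \<in> {1, 2, 3}"
    using k by auto
  ultimately show ?thesis
    using v d mv unfolding mem_legal_moves by blast
qed

lemma abalone_move_iff_legal_moves:
  "P \<subseteq> board \<Longrightarrow> abalone_move P Q P' Q' off \<longleftrightarrow> (P', Q', off) \<in> set (legal_moves P Q)"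
  using legal_moves_sound legal_moves_complete by blast

text \<open>A certificate entry (B, G, B', G', push) claims that Black wins from (B, G):
  if push holds, Black's move to (B', G') pushes a marble off; otherwise it is a
  quiet move after which Gray can move and every Gray reply is harmless and
  reaches a constellation already certified (the list W of earlier entries).\<close>
definition quiet_winning_move ::
  "(cell set \<times> cell set) list \<Rightarrow> cell set \<Rightarrow> cell set \<Rightarrow> cell set \<Rightarrow> cell set \<Rightarrow> bool" where
  "quiet_winning_move W B G B' G' \<longleftrightarrow>
    (B', G', False) \<in> set (legal_moves B G) \<and> G' \<subseteq> board \<and> legal_moves G' B' \<noteq> [] \<and>
    list_all (\<lambda>(G'', B'', off). \<not> off \<and> (B'', G'') \<in> set W) (legal_moves G' B')"

fun valid_certificate ::
  "(cell set \<times> cell set) list \<Rightarrow> (cell set \<times> cell set \<times> cell set \<times> cell set \<times> bool) list \<Rightarrow> bool" where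
  "valid_certificate W [] = True"
| "valid_certificate W ((B, G, B', G', push) # cs) \<longleftrightarrow>
    (if push then (B', G', True) \<in> set (legal_moves B G) else quiet_winning_move W B G B' G') \<and>
    valid_certificate ((B, G) # W) cs"

lemma quiet_winning_move_black_wins:
  assumes move: "quiet_winning_move W B G B' G'"
    and W: "\<forall>(B, G)\<in>set W. black_wins B G"
  shows "black_wins B G"
proof (rule black_wins.step)
  show "abalone_move B G B' G' False"
    using move legal_moves_sound unfolding quiet_winning_move_def by blast
  from move obtain G'' B'' off where "(G'', B'', off) \<in> set (legal_moves G' B')"
    unfolding quiet_winning_move_def by (metis list.set_intros(1) neq_Nil_conv prod_cases3)
  then show "\<exists>G'' B'' off. abalone_move G' B' G'' B'' off"
    using legal_moves_sound by blast
  show "\<forall>G'' B'' off. abalone_move G' B' G'' B'' off \<longrightarrow> \<not> off \<and> black_wins B'' G''"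
    using move W abalone_move_iff_legal_moves[of G']
    unfolding quiet_winning_move_def list_all_iff by fastforce
qed

lemma valid_certificate_black_wins:
  "valid_certificate W cs \<Longrightarrow> \<forall>(B, G)\<in>set W. black_wins B G \<Longrightarrow> \<forall>(B, G, _)\<in>set cs. black_wins B G"
proof (induction W cs rule: valid_certificate.induct)
  case (1 W)
  then show ?case by simp
next
  case (2 W B G B' G' push cs)
  have "black_wins B G"
  proof (cases push)
    case True
    then have "(B', G', True) \<in> set (legal_moves B G)"
      using "2.prems"(1) by simp
    then show ?thesis
      by (blast intro: black_wins.push_now legal_moves_sound)
  next
    case False
    then show ?thesis
      using "2.prems" quiet_winning_move_black_wins by auto
  qed
  then show ?case
    using 2 by auto
qed

definition certificate :: "(cell set \<times> cell set \<times> cell set \<times> cell set \<times> bool) list" where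
  "certificate = [
    ({cE, cF, cI}, {cA, cC, cH}, {cC, cE, cF}, {cA, cH}, True),
    ({cE, cF, cI}, {cB, cD, cH}, {cD, cE, cI}, {cB, cH}, True),
    ({cE, cF, cI}, {cB, cC, cH}, {cC, cE, cF}, {cB, cH}, True),
    ({cE, cF, cI}, {cA, cB, cD}, {cD, cE, cI}, {cA, cB}, True),
    ({cC, cE, cF}, {cA, cB, cH}, {cE, cF, cI}, {cA, cB, cH}, False),
    ({cC, cE, cF}, {cB, cD, cI}, {cC, cD, cE}, {cB, cI}, True),
    ({cC, cE, cF}, {cA, cD, cH}, {cC, cD, cE}, {cA, cH}, True),
    ({cC, cF, cG}, {cB, cE, cH}, {cC, cE, cF}, {cB, cD, cH}, False),
    ({cC, cF, cG}, {cA, cE, cI}, {cF, cG, cI}, {cA, cE}, True),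
    ({cC, cE, cF}, {cB, cD, cH}, {cC, cD, cE}, {cB, cH}, True),
    ({cC, cE, cF}, {cA, cD, cI}, {cC, cD, cE}, {cA, cI}, True),
    ({cC, cF, cG}, {cA, cE, cH}, {cC, cE, cF}, {cA, cD, cH}, False),
    ({cC, cF, cG}, {cA, cD, cI}, {cF, cG, cI}, {cA, cD}, True),
    ({cC, cF, cG}, {cB, cD, cH}, {cC, cE, cF}, {cB, cD, cH}, False)]"

lemma certificate_valid: "valid_certificate [] certificate"
  by code_simp

lemma isomorphic_iff_list_syms:
  "isomorphic X Y \<longleftrightarrow>
    (\<exists>\<sigma>\<in>set [id, sym_lr, sym_tb, sym_lr \<circ> sym_tb]. \<sigma> ` fst X = fst Y \<and> \<sigma> ` snd X = snd Y)"
  by (simp add: isomorphic_def board_syms_def)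

lemma gray_moves_from_C1_covered:
  "list_all (\<lambda>(G, B, _). isomorphic (B, G) C2 \<or> isomorphic (B, G) C3 \<or>
      (B, G) \<in> set (map (\<lambda>(B, G, _). (B, G)) certificate))
    (legal_moves (snd C1) (fst C1))"
  unfolding isomorphic_iff_list_syms by code_simp

theorem lemma5:
  assumes "abalone_move (snd C1) (fst C1) G B off"
    and "\<not> isomorphic (B, G) C2"
    and "\<not> isomorphic (B, G) C3"
  shows "black_wins B G"
proof -
  have "snd C1 \<subseteq> board"
    by (simp add: C1_def board_def)
  then have "(G, B, off) \<in> set (legal_moves (snd C1) (fst C1))"
    using assms(1) legal_moves_complete by blast
  then have "(B, G) \<in> set (map (\<lambda>(B, G, _). (B, G)) certificate)"
    using gray_moves_from_C1_covered assms(2,3) unfolding list_all_iff by fastforce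
  moreover have "\<forall>(B, G, _)\<in>set certificate. black_wins B G"
    using valid_certificate_black_wins[OF certificate_valid] by simp
  ultimately show ?thesis
    by auto
qed

end
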